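(* Let $P\subseteq\mathbb{R}^d$ and $P'\subseteq\mathbb{R}^{d'}$ be nonempty polyhedra such that $P'$ is the image of a face of $P$ under an affine map. If $P$ admits a MILEF of complexity $(m,k)$, then $P'$ also admits a MILEF of complexity $(m,k)$.
   Context: A MILEF of complexity $(m,k)$ of a convex set $P\subseteq\mathbb{R}^d$ is a triple $(Q,\sigma,\pi)$ where $Q\subseteq\mathbb{R}^\ell$ is a polyhedron with at most $m$ facets, and $\sigma:\mathbb{R}^\ell\to\mathbb{R}^k$, $\pi:\mathbb{R}^\ell\to\mathbb{R}^d$ are affine maps with $P=\operatorname{conv}(\pi(Q\cap\sigma^{-1}(\mathbb{Z}^k)))$. *)

theory Defs
  imports "HOL-Analysis.Analysis"
begin

text \<open>Since the dimension \<open>l\<close> of the lifted space of a MILEF is existentially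
quantified, points of \<open>R^l\<close> are represented as functions \<open>nat \<Rightarrow> real\<close> vanishing
from index \<open>l\<close> on.\<close>

definition Rn :: "nat \<Rightarrow> (nat \<Rightarrow> real) set" where
  "Rn n = {x. \<forall>i\<ge>n. x i = 0}"

definition Zn :: "nat \<Rightarrow> (nat \<Rightarrow> real) set" where
  "Zn n = {z \<in> Rn n. \<forall>i<n. z i \<in> \<int>}"

definition polyhedron_n :: "nat \<Rightarrow> (nat \<Rightarrow> real) set \<Rightarrow> bool" where
  "polyhedron_n l Q \<longleftrightarrow>
     (\<exists>(r::nat) a \<beta>. Q = {x \<in> Rn l. \<forall>i<r. (\<Sum>j<l. a i j * x j) \<le> \<beta> i})"

definition convex_n :: "(nat \<Rightarrow> real) set \<Rightarrow> bool" where
  "convex_n S \<longleftrightarrow> (\<forall>a\<in>S. \<forall>b\<in>S. \<forall>t::real. 0 \<le> t \<and> t \<le> 1 \<longrightarrow>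
                      (\<lambda>i. (1 - t) * a i + t * b i) \<in> S)"

definition face_n :: "(nat \<Rightarrow> real) set \<Rightarrow> (nat \<Rightarrow> real) set \<Rightarrow> bool" where
  "face_n F Q \<longleftrightarrow> F \<subseteq> Q \<and> convex_n F \<and>
     (\<forall>a\<in>Q. \<forall>b\<in>Q. \<forall>x\<in>F. a \<noteq> b \<and>
        (\<exists>t::real. 0 < t \<and> t < 1 \<and> x = (\<lambda>i. (1 - t) * a i + t * b i))
        \<longrightarrow> a \<in> F \<and> b \<in> F)"

definition lin_indep_n :: "(nat \<Rightarrow> nat \<Rightarrow> real) \<Rightarrow> nat \<Rightarrow> bool" where
  "lin_indep_n v r \<longleftrightarrow>
     (\<forall>c::nat \<Rightarrow> real. (\<forall>j. (\<Sum>i<r. c i * v i j) = 0) \<longrightarrow> (\<forall>i<r. c i = 0))"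

definition affdim_n :: "(nat \<Rightarrow> real) set \<Rightarrow> int" where
  "affdim_n S = (if S = {} then -1 else
     int (GREATEST r. \<exists>x::nat \<Rightarrow> nat \<Rightarrow> real. (\<forall>i\<le>r. x i \<in> S) \<and>
            lin_indep_n (\<lambda>i j. x (Suc i) j - x 0 j) r))"

definition facet_n :: "(nat \<Rightarrow> real) set \<Rightarrow> (nat \<Rightarrow> real) set \<Rightarrow> bool" where
  "facet_n F Q \<longleftrightarrow> face_n F Q \<and> F \<noteq> {} \<and> affdim_n F = affdim_n Q - 1"

text \<open>Affine maps R^l \<rightarrow> R^k and R^l \<rightarrow> real^'d (only their values on R^l matter).\<close>
definition affine_nn :: "nat \<Rightarrow> nat \<Rightarrow> ((nat \<Rightarrow> real) \<Rightarrow> (nat \<Rightarrow> real)) \<Rightarrow> bool" where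
  "affine_nn l k \<sigma> \<longleftrightarrow> (\<exists>A b. \<forall>x\<in>Rn l.
      \<sigma> x = (\<lambda>i. if i < k then b i + (\<Sum>j<l. A i j * x j) else 0))"

definition affine_nv :: "nat \<Rightarrow> ((nat \<Rightarrow> real) \<Rightarrow> 'a::real_vector) \<Rightarrow> bool" where
  "affine_nv l \<pi> \<longleftrightarrow> (\<exists>v c. \<forall>x\<in>Rn l. \<pi> x = c + (\<Sum>j<l. x j *\<^sub>R v j))"

definition has_MILEF :: "nat \<Rightarrow> nat \<Rightarrow> (real ^ 'd) set \<Rightarrow> bool" where
  "has_MILEF m k P \<longleftrightarrow>
     (\<exists>l Q \<sigma> \<pi>. Q \<subseteq> Rn l \<and> polyhedron_n l Q \<and>
        finite {F. facet_n F Q} \<and> card {F. facet_n F Q} \<le> m \<and>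
        affine_nn l k \<sigma> \<and> affine_nv l \<pi> \<and>
        P = convex hull (\<pi> ` {x \<in> Q. \<sigma> x \<in> Zn k}))"

end

theory Submission
  imports Defs
begin

text \<open>The face \<open>F\<close> of the polyhedron \<open>P\<close> is exposed: \<open>F = P \<inter> {y. c \<bullet> y = d}\<close> with
  \<open>P \<subseteq> {y. c \<bullet> y \<le> d}\<close>. Pulling the hyperplane back along the affine map \<open>\<pi>\<close> of a MILEF
  \<open>(Q, \<sigma>, \<pi>)\<close> of \<open>P\<close> gives a hyperplane \<open>H\<close> of the lifted space, and since a supporting
  hyperplane of a convex hull cuts out the hull of the generators it contains, \<open>(Q \<inter> H, \<sigma>, \<pi>)\<close>
  is a MILEF of \<open>F\<close>. The section \<open>Q \<inter> H\<close> is a polyhedron with at most as many facets as \<open>Q\<close>: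
  writing \<open>Q\<close> by an irredundant system of inequalities, every facet of \<open>Q \<inter> H\<close> is cut out by one
  of these inequalities, which already defines a facet of \<open>Q\<close>. Finally, composing \<open>\<pi>\<close> with the
  affine map \<open>f\<close> gives a MILEF of \<open>f ` F\<close> with the same \<open>Q\<close> and \<open>\<sigma>\<close>.\<close>

section \<open>Linear forms on the lifted space\<close>

definition inner_n :: "nat \<Rightarrow> (nat \<Rightarrow> real) \<Rightarrow> (nat \<Rightarrow> real) \<Rightarrow> real" where
  "inner_n l a x = (\<Sum>j<l. a j * x j)"

lemma inner_n_lincomb: "inner_n l a (\<lambda>i. u * x i + v * y i) = u * inner_n l a x + v * inner_n l a y"
  by (simp add: inner_n_def sum.distrib sum_distrib_left algebra_simps)

lemma inner_n_diff: "inner_n l a (\<lambda>i. x i - y i) = inner_n l a x - inner_n l a y"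
  by (simp add: inner_n_def sum_subtractf algebra_simps)

lemma inner_n_shear: "inner_n l u (\<lambda>j. x j - s * d j) = inner_n l u x - s * inner_n l u d"
  using inner_n_lincomb[of l u 1 x "- s" d] by simp

lemma Rn_lincomb: "x \<in> Rn l \<Longrightarrow> y \<in> Rn l \<Longrightarrow> (\<lambda>i. u * x i + v * y i) \<in> Rn l"
  by (simp add: Rn_def)

lemma Rn_diff: "x \<in> Rn l \<Longrightarrow> y \<in> Rn l \<Longrightarrow> (\<lambda>i. x i - y i) \<in> Rn l"
  by (simp add: Rn_def)

lemma exists_pos_scale_below:
  fixes f g :: "'a \<Rightarrow> real"
  assumes "finite K" and pos: "\<forall>k\<in>K. 0 < f k"
  shows "\<exists>e>0. \<forall>k\<in>K. e * g k < f k"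
proof -
  define e where "e = Min (insert 1 ((\<lambda>k. f k / (\<bar>g k\<bar> + 1)) ` K))"
  have e: "e > 0" using assms by (simp add: e_def)
  have "e * g k < f k" if "k \<in> K" for k
  proof -
    have "e \<le> f k / (\<bar>g k\<bar> + 1)" using assms that by (simp add: e_def)
    then have "e * \<bar>g k\<bar> \<le> f k / (\<bar>g k\<bar> + 1) * \<bar>g k\<bar>"
      by (rule mult_right_mono) simp_all
    moreover have "e * g k \<le> e * \<bar>g k\<bar>" using e by (simp add: mult_left_mono)
    ultimately have "e * g k \<le> f k / (\<bar>g k\<bar> + 1) * \<bar>g k\<bar>" by linarith
    also have "\<dots> < f k" using pos that by (simp add: field_simps)
    finally show ?thesis .
  qed
  then show ?thesis using e by blast
qed

lemma convex_comb_eq_bound: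
  fixes t A B \<beta> :: real
  assumes "0 < t" "t < 1" "A \<le> \<beta>" "B \<le> \<beta>" "(1 - t) * A + t * B = \<beta>"
  shows "A = \<beta> \<and> B = \<beta>"
proof -
  have "(1 - t) * (\<beta> - A) + t * (\<beta> - B) = 0" using assms(5) by (simp add: algebra_simps)
  moreover have "(1 - t) * (\<beta> - A) \<ge> 0" "t * (\<beta> - B) \<ge> 0" using assms by auto
  ultimately have "(1 - t) * (\<beta> - A) = 0" "t * (\<beta> - B) = 0" by linarith+
  then show ?thesis using assms by auto
qed

lemma convex_comb_le:
  fixes t A B \<beta> :: real
  assumes "0 \<le> t" "t \<le> 1" "A \<le> \<beta>" "B \<le> \<beta>"
  shows "(1 - t) * A + t * B \<le> \<beta>"
proof -
  have "(1 - t) * A \<le> (1 - t) * \<beta>" "t * B \<le> t * \<beta>" using assms by (auto intro: mult_left_mono)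
  then show ?thesis by (simp add: algebra_simps)
qed

lemma convex_comb_less_left:
  fixes t A B \<beta> :: real
  assumes "0 \<le> t" "t < 1" "A < \<beta>" "B \<le> \<beta>"
  shows "(1 - t) * A + t * B < \<beta>"
proof -
  have "(1 - t) * A < (1 - t) * \<beta>" "t * B \<le> t * \<beta>" using assms by (auto intro: mult_left_mono)
  then show ?thesis by (simp add: algebra_simps)
qed

lemma convex_comb_less_right:
  fixes t A B \<beta> :: real
  assumes "0 < t" "t \<le> 1" "A \<le> \<beta>" "B < \<beta>"
  shows "(1 - t) * A + t * B < \<beta>"
proof -
  have "(1 - t) * A \<le> (1 - t) * \<beta>" "t * B < t * \<beta>" using assms by (auto intro: mult_left_mono)
  then show ?thesis by (simp add: algebra_simps)
qed

section \<open>Linear independence\<close>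

definition skip :: "nat \<Rightarrow> nat \<Rightarrow> nat" where "skip p i = (if i < p then i else Suc i)"

definition unskip :: "nat \<Rightarrow> nat \<Rightarrow> nat" where "unskip p i = (if i < p then i else i - 1)"

lemma skip_ne: "skip p i \<noteq> p" by (simp add: skip_def)

lemma unskip_skip[simp]: "unskip p (skip p i) = i" by (simp add: skip_def unskip_def)

lemma skip_less: "i < r - 1 \<Longrightarrow> p < r \<Longrightarrow> skip p i < r" by (auto simp: skip_def)

lemma sum_skip:
  assumes "p < (r::nat)"
  shows "(\<Sum>k<r. f k) = f p + (\<Sum>i<r-1. f (skip p i))"
proof -
  have "(\<Sum>k<r. f k) = f p + (\<Sum>k\<in>{..<r}-{p}. f k)"
    using assms by (simp add: sum.remove)
  also have "(\<Sum>k\<in>{..<r}-{p}. f k) = (\<Sum>i<r-1. f (skip p i))"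
    by (rule sum.reindex_bij_witness[where i="skip p" and j="unskip p"])
       (use assms in \<open>auto simp: skip_def unskip_def split: if_splits\<close>)
  finally show ?thesis .
qed

lemma lin_indep_n_scale:
  assumes "lin_indep_n v r" and "e \<noteq> 0"
  shows "lin_indep_n (\<lambda>m j. e * v m j) r"
  unfolding lin_indep_n_def
proof (intro allI impI)
  fix c i assume "\<forall>j. (\<Sum>m<r. c m * (e * v m j)) = 0" and i: "i < r"
  then have "\<forall>j. (\<Sum>m<r. (c m * e) * v m j) = 0" by (simp add: mult.assoc)
  then have "c i * e = 0"
    using assms(1)[unfolded lin_indep_n_def, rule_format, of "\<lambda>m. c m * e"] i by simp
  then show "c i = 0" using assms(2) by simp
qed

lemma lin_indep_n_drop_shear:
  assumes li: "lin_indep_n v r" and d: "d = (\<lambda>j. \<Sum>k<r. \<nu> k * v k j)"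
    and k0: "k0 < r" "\<nu> k0 \<noteq> 0"
  shows "lin_indep_n (\<lambda>m j. v (skip k0 m) j - \<mu> m * d j) (r - 1)"
  unfolding lin_indep_n_def
proof (intro allI impI)
  fix cc m
  assume h: "\<forall>j. (\<Sum>m<r - 1. cc m * (v (skip k0 m) j - \<mu> m * d j)) = 0" and m: "m < r - 1"
  define \<tau> where "\<tau> = (\<Sum>m<r - 1. cc m * \<mu> m)"
  define C where "C = (\<lambda>k. (if k = k0 then 0 else cc (unskip k0 k)) - \<tau> * \<nu> k)"
  have "(\<Sum>k<r. C k * v k j) = 0" for j
  proof -
    have "(\<Sum>k<r. (if k = k0 then 0 else cc (unskip k0 k)) * v k j) = (\<Sum>m<r - 1. cc m * v (skip k0 m) j)"
      using sum_skip[OF k0(1), of "\<lambda>k. (if k = k0 then 0 else cc (unskip k0 k)) * v k j"]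
      by (simp add: skip_ne)
    then have "(\<Sum>k<r. C k * v k j) = (\<Sum>m<r - 1. cc m * v (skip k0 m) j) - \<tau> * d j"
      by (simp add: C_def d left_diff_distrib sum_subtractf sum_distrib_left mult.assoc)
    also have "\<dots> = (\<Sum>m<r - 1. cc m * (v (skip k0 m) j - \<mu> m * d j))"
      by (simp add: \<tau>_def right_diff_distrib sum_subtractf sum_distrib_right mult.assoc)
    finally show ?thesis using h by simp
  qed
  then have C0: "\<forall>k<r. C k = 0" using li unfolding lin_indep_n_def by blast
  then have "C k0 = 0" using k0(1) by blast
  then have "\<tau> = 0" using k0(2) by (simp add: C_def)
  moreover have "C (skip k0 m) = 0" using C0 skip_less[OF m k0(1)] by blast
  ultimately show "cc m = 0" by (simp add: C_def skip_ne)
qed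

lemma lin_indep_n_le_dim:
  "lin_indep_n v r \<Longrightarrow> \<forall>i<r. v i \<in> Rn l \<Longrightarrow> r \<le> l"
proof (induction l arbitrary: v r)
  case 0
  then have "\<forall>j. (\<Sum>i<r. 1 * v i j) = 0" by (simp add: Rn_def)
  then have "\<forall>i<r. (1::real) = 0"
    using "0.prems"(1)[unfolded lin_indep_n_def, rule_format, of "\<lambda>_. 1"] by blast
  then show ?case by auto
next
  case (Suc l)
  show ?case
  proof (cases "\<forall>i<r. v i l = 0")
    case True
    have "v i j = 0" if "i < r" "l \<le> j" for i j
      using True Suc.prems(2) that by (cases "j = l") (auto simp: Rn_def)
    then have "\<forall>i<r. v i \<in> Rn l" by (simp add: Rn_def)
    then show ?thesis using Suc.IH[OF Suc.prems(1)] by simp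
  next
    case False
    then obtain p where p: "p < r" "v p l \<noteq> 0" by auto
    have "(\<Sum>k<r. (if k = p then 1 else 0) * v k j) = (\<Sum>k<r. if k = p then v p j else 0)" for j
      by (intro sum.cong) auto
    then have vp: "v p = (\<lambda>j. \<Sum>k<r. (if k = p then 1 else 0) * v k j)" using p(1) by simp
    define w where "w = (\<lambda>i j. v (skip p i) j - v (skip p i) l / v p l * v p j)"
    \<comment> \<open>Gaussian elimination of the last coordinate using the pivot \<open>v p\<close>.\<close>
    have "w i j = 0" if "i < r - 1" "l \<le> j" for i j
      using Suc.prems(2) skip_less[OF that(1) p(1)] p(1,2) that(2)
      by (cases "j = l") (auto simp: w_def Rn_def)
    then have "\<forall>i<r - 1. w i \<in> Rn l" by (simp add: Rn_def)
    moreover have "lin_indep_n w (r - 1)"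
      unfolding w_def by (rule lin_indep_n_drop_shear[OF Suc.prems(1) vp p(1)]) simp
    ultimately have "r - 1 \<le> l" using Suc.IH by blast
    then show ?thesis by simp
  qed
qed

section \<open>Affine dimension\<close>

definition aff_indep_in :: "(nat \<Rightarrow> real) set \<Rightarrow> nat \<Rightarrow> bool" where
  "aff_indep_in S r \<longleftrightarrow> (\<exists>x. (\<forall>i\<le>r. x i \<in> S) \<and> lin_indep_n (\<lambda>i j. x (Suc i) j - x 0 j) r)"

lemma aff_indep_in_0: "S \<noteq> {} \<Longrightarrow> aff_indep_in S 0"
  unfolding aff_indep_in_def lin_indep_n_def by auto

lemma aff_indep_in_le_dim: "S \<subseteq> Rn l \<Longrightarrow> aff_indep_in S r \<Longrightarrow> r \<le> l"
  unfolding aff_indep_in_def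
proof (elim exE conjE)
  fix x assume S: "S \<subseteq> Rn l" and x: "\<forall>i\<le>r. x i \<in> S" and li: "lin_indep_n (\<lambda>i j. x (Suc i) j - x 0 j) r"
  have "\<forall>i<r. (\<lambda>j. x (Suc i) j - x 0 j) \<in> Rn l"
  proof (intro allI impI)
    fix i assume "i < r"
    then have "x (Suc i) \<in> Rn l" "x 0 \<in> Rn l" using x S by auto
    then show "(\<lambda>j. x (Suc i) j - x 0 j) \<in> Rn l" by (rule Rn_diff)
  qed
  then show "r \<le> l" using lin_indep_n_le_dim[OF li] by auto
qed

lemma affdim_n_eq_Greatest: "S \<noteq> {} \<Longrightarrow> affdim_n S = int (GREATEST r. aff_indep_in S r)"
  unfolding affdim_n_def aff_indep_in_def by simp

lemma affdim_n_witness: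
  assumes "S \<subseteq> Rn l" "S \<noteq> {}"
  shows "aff_indep_in S (nat (affdim_n S))" "affdim_n S \<ge> 0"
proof -
  have "aff_indep_in S (GREATEST r. aff_indep_in S r)"
    by (rule GreatestI_nat[of _ 0 l]) (use aff_indep_in_0 assms aff_indep_in_le_dim in auto)
  then show "aff_indep_in S (nat (affdim_n S))" "affdim_n S \<ge> 0" using affdim_n_eq_Greatest assms by auto
qed

lemma aff_indep_in_le_affdim_n:
  assumes "S \<subseteq> Rn l" "aff_indep_in S r"
  shows "int r \<le> affdim_n S"
proof -
  have ne: "S \<noteq> {}" using assms(2) by (auto simp: aff_indep_in_def)
  have "r \<le> (GREATEST r. aff_indep_in S r)"
    by (rule Greatest_le_nat[of _ _ l]) (use assms aff_indep_in_le_dim in auto)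
  then show ?thesis using affdim_n_eq_Greatest ne by auto
qed

lemma aff_indep_in_from_directions:
  assumes "z \<in> G" and "\<forall>m<n. (\<lambda>j. z j + w m j) \<in> G" and "lin_indep_n w n"
  shows "aff_indep_in G n"
proof -
  define x where "x = (\<lambda>m. if m = 0 then z else (\<lambda>j. z j + w (m - 1) j))"
  show ?thesis unfolding aff_indep_in_def
  proof (intro exI conjI)
    show "\<forall>m\<le>n. x m \<in> G" using assms(1,2) by (auto simp: x_def)
    show "lin_indep_n (\<lambda>m j. x (Suc m) j - x 0 j) n" using assms(3) by (simp add: x_def)
  qed
qed

definition aff_point :: "(nat \<Rightarrow> nat \<Rightarrow> real) \<Rightarrow> nat \<Rightarrow> (nat \<Rightarrow> real) \<Rightarrow> nat \<Rightarrow> real" where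
  "aff_point x r la = (\<lambda>j. x 0 j + (\<Sum>i<r. la i * (x (Suc i) j - x 0 j)))"

lemma aff_point_convex_comb:
  "aff_point x r (\<lambda>i. (1 - t) * \<alpha> i + t * \<beta> i) = (\<lambda>j. (1 - t) * aff_point x r \<alpha> j + t * aff_point x r \<beta> j)"
  unfolding aff_point_def
proof (rule ext)
  fix j
  have "(\<Sum>i<r. ((1 - t) * \<alpha> i + t * \<beta> i) * (x (Suc i) j - x 0 j))
      = (1 - t) * (\<Sum>i<r. \<alpha> i * (x (Suc i) j - x 0 j)) + t * (\<Sum>i<r. \<beta> i * (x (Suc i) j - x 0 j))"
    by (simp add: sum.distrib sum_distrib_left distrib_right mult.assoc)
  then show "x 0 j + (\<Sum>i<r. ((1 - t) * \<alpha> i + t * \<beta> i) * (x (Suc i) j - x 0 j)) =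
      (1 - t) * (x 0 j + (\<Sum>i<r. \<alpha> i * (x (Suc i) j - x 0 j)))
      + t * (x 0 j + (\<Sum>i<r. \<beta> i * (x (Suc i) j - x 0 j)))"
    by (simp add: algebra_simps)
qed

lemma aff_point_in_convex:
  assumes "convex_n A" "\<forall>i\<le>r. x i \<in> A" "\<forall>i<r. la i \<ge> 0" "(\<Sum>i<r. la i) \<le> 1"
  shows "aff_point x r la \<in> A"
  using assms(2-4)
proof (induction r arbitrary: la)
  case 0
  then show ?case by (simp add: aff_point_def)
next
  case (Suc r)
  have s: "(\<Sum>i<r. la i) + la r \<le> 1" using Suc.prems by simp
  have nn: "(\<Sum>i<r. la i) \<ge> 0" using Suc.prems by (intro sum_nonneg) auto
  show ?case
  proof (cases "la r = 1")
    case True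
    then have "(\<Sum>i<r. la i) = 0" using s nn by linarith
    then have z: "\<forall>i<r. la i = 0" using Suc.prems sum_nonneg_eq_0_iff[of "{..<r}" la] by auto
    have "aff_point x (Suc r) la = x (Suc r)"
      unfolding aff_point_def using z True by auto
    then show ?thesis using Suc.prems by auto
  next
    case False
    have lr: "la r < 1" "la r \<ge> 0" using s nn False Suc.prems(2) by auto
    define la' where "la' = (\<lambda>i. la i / (1 - la r))"
    have "(\<Sum>i<r. la' i) = (\<Sum>i<r. la i) / (1 - la r)"
      by (simp add: la'_def sum_divide_distrib)
    also have "\<dots> \<le> 1" using s lr by (simp add: divide_le_eq)
    finally have "aff_point x r la' \<in> A" using Suc.IH Suc.prems lr by (auto simp: la'_def)
    then have "(\<lambda>j. (1 - la r) * aff_point x r la' j + la r * x (Suc r) j) \<in> A"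
      using assms(1) Suc.prems(1) lr unfolding convex_n_def by auto
    moreover have "(\<lambda>j. (1 - la r) * aff_point x r la' j + la r * x (Suc r) j) = aff_point x (Suc r) la"
    proof
      fix j
      have "(1 - la r) * (\<Sum>i<r. la' i * (x (Suc i) j - x 0 j)) = (\<Sum>i<r. la i * (x (Suc i) j - x 0 j))"
        using lr by (simp add: la'_def sum_distrib_left)
      then show "(1 - la r) * aff_point x r la' j + la r * x (Suc r) j = aff_point x (Suc r) la j"
        unfolding aff_point_def by (simp add: algebra_simps)
    qed
    ultimately show ?thesis by simp
  qed
qed

lemma exists_convex_comb_eq_barycentre:
  fixes \<mu> :: "nat \<Rightarrow> real"
  obtains \<alpha> t where "\<forall>i<r. 0 \<le> \<alpha> i" "(\<Sum>i<r. \<alpha> i) \<le> 1" "0 < t" "t < 1"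
    "(\<lambda>i. (1 - t) * \<alpha> i + t * \<mu> i) = (\<lambda>i. 1 / (real r + 1))"
proof -
  define b where "b = 1 / (real r + 1)"
  define M where "M = 1 + (\<Sum>i<r. \<bar>\<mu> i - b\<bar>)"
  have M1: "M \<ge> 1" by (simp add: M_def sum_nonneg)
  define e where "e = b / M"
  have e: "e > 0" "e * M = b" using M1 by (simp_all add: e_def b_def)
  \<comment> \<open>Push the barycentre slightly away from \<open>\<mu>\<close>.\<close>
  define \<alpha> where "\<alpha> = (\<lambda>i. b - e * (\<mu> i - b))"
  define X where "X = (\<Sum>i<r. \<mu> i - b)"
  have "\<bar>X\<bar> \<le> (\<Sum>i<r. \<bar>\<mu> i - b\<bar>)" unfolding X_def by (rule sum_abs)
  then have "\<bar>X\<bar> \<le> M" unfolding M_def by linarith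
  then have "e * - X \<le> e * M" using e(1) by (intro mult_left_mono) auto
  moreover have "(\<Sum>i<r. \<alpha> i) = real r * b - e * X"
    by (simp add: \<alpha>_def X_def sum_subtractf sum_distrib_left[symmetric])
  ultimately have "(\<Sum>i<r. \<alpha> i) \<le> real r * b + b" using e(2) by simp
  also have "\<dots> = 1" by (simp add: b_def field_simps)
  finally have sum\<alpha>: "(\<Sum>i<r. \<alpha> i) \<le> 1" .
  have nonneg: "\<forall>i<r. 0 \<le> \<alpha> i"
  proof (intro allI impI)
    fix i assume "i < r"
    then have "\<bar>\<mu> i - b\<bar> \<le> (\<Sum>i<r. \<bar>\<mu> i - b\<bar>)" by (intro member_le_sum) auto
    then have "\<bar>\<mu> i - b\<bar> < M" unfolding M_def by linarith
    then have "e * (\<mu> i - b) \<le> b" using e by (metis abs_le_D1 less_eq_real_def mult_left_mono order.trans)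
    then show "0 \<le> \<alpha> i" by (simp add: \<alpha>_def)
  qed
  have comb: "(\<lambda>i. (1 - e / (1 + e)) * \<alpha> i + e / (1 + e) * \<mu> i) = (\<lambda>i. b)"
  proof -
    have "1 - e / (1 + e) = 1 / (1 + e)" using e(1) by (simp add: field_simps)
    moreover have "1 / (1 + e) * \<alpha> i + e / (1 + e) * \<mu> i = b" for i
    proof -
      have "1 / (1 + e) * \<alpha> i + e / (1 + e) * \<mu> i = (\<alpha> i + e * \<mu> i) / (1 + e)"
        by (simp add: add_divide_distrib)
      also have "\<alpha> i + e * \<mu> i = b * (1 + e)" by (simp add: \<alpha>_def algebra_simps)
      finally show ?thesis using e(1) by simp
    qed
    ultimately show ?thesis by simp
  qed
  show ?thesis
    by (rule that[OF nonneg sum\<alpha> _ _ comb[unfolded b_def]]) (use e(1) in simp_all)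
qed

lemma face_n_contains_aff_point:
  assumes face: "face_n A B" and x: "\<forall>i\<le>r. x i \<in> A" and y: "y \<in> B"
    and yeq: "y = aff_point x r \<mu>"
  shows "y \<in> A"
proof -
  have conv: "convex_n A" and AB: "A \<subseteq> B" using face by (auto simp: face_n_def)
  obtain \<alpha> t where \<alpha>: "\<forall>i<r. 0 \<le> \<alpha> i" "(\<Sum>i<r. \<alpha> i) \<le> 1" and t: "0 < t" "t < 1"
    and bary: "(\<lambda>i. (1 - t) * \<alpha> i + t * \<mu> i) = (\<lambda>i. 1 / (real r + 1))"
    by (rule exists_convex_comb_eq_barycentre)
  have w: "aff_point x r \<alpha> \<in> A" using aff_point_in_convex[OF conv x \<alpha>] .
  have "aff_point x r (\<lambda>i. 1 / (real r + 1)) \<in> A"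
    using aff_point_in_convex[OF conv x] by (simp add: field_simps)
  moreover have "aff_point x r (\<lambda>i. 1 / (real r + 1)) = (\<lambda>j. (1 - t) * aff_point x r \<alpha> j + t * y j)"
    using aff_point_convex_comb[of x r t \<alpha> \<mu>] bary yeq by simp
  ultimately show ?thesis
    using face w AB y t unfolding face_n_def by (cases "aff_point x r \<alpha> = y") blast+
qed

lemma sum_extend_point:
  "(\<Sum>i<Suc r. c i * ((x(Suc r := q)) (Suc i) j - (x(Suc r := q)) 0 j))
   = (\<Sum>i<r. c i * (x (Suc i) j - x 0 j)) + c r * (q j - x 0 j)"
  by (simp add: lessThan_Suc add.commute)

lemma lin_dep_extend_point:
  assumes li: "lin_indep_n (\<lambda>i j. x (Suc i) j - x 0 j) r"
    and h: "\<forall>j. (\<Sum>i<r. c i * (x (Suc i) j - x 0 j)) + c r * (q j - x 0 j) = 0"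
  shows "(c r = 0 \<longrightarrow> (\<forall>i<r. c i = 0)) \<and> (c r \<noteq> 0 \<longrightarrow> q = aff_point x r (\<lambda>i. - c i / c r))"
proof (intro conjI impI)
  assume "c r = 0"
  then have "\<forall>j. (\<Sum>i<r. c i * (x (Suc i) j - x 0 j)) = 0" using h by simp
  then show "\<forall>i<r. c i = 0" using li unfolding lin_indep_n_def by blast
next
  assume cr: "c r \<noteq> 0"
  show "q = aff_point x r (\<lambda>i. - c i / c r)"
  proof
    fix j
    have "(\<Sum>i<r. - c i / c r * (x (Suc i) j - x 0 j)) = - (\<Sum>i<r. c i * (x (Suc i) j - x 0 j)) / c r"
      by (simp add: sum_divide_distrib sum_negf)
    also have "\<dots> = q j - x 0 j" using h[rule_format, of j] cr by (simp add: field_simps)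
    finally show "q j = aff_point x r (\<lambda>i. - c i / c r) j" by (simp add: aff_point_def)
  qed
qed

lemma affdim_n_spanning:
  assumes S: "S \<subseteq> Rn l" and x: "\<forall>i\<le>r. x i \<in> S" and li: "lin_indep_n (\<lambda>i j. x (Suc i) j - x 0 j) r"
    and r: "int r = affdim_n S" and q: "q \<in> S"
  shows "\<exists>\<mu>. q = aff_point x r \<mu>"
proof -
  have "\<not> aff_indep_in S (Suc r)"
  proof
    assume "aff_indep_in S (Suc r)"
    then have "int (Suc r) \<le> affdim_n S" using aff_indep_in_le_affdim_n S by blast
    then show False using r by simp
  qed
  moreover have "\<forall>i\<le>Suc r. (x(Suc r := q)) i \<in> S" using x q by auto
  ultimately have "\<not> lin_indep_n (\<lambda>i j. (x(Suc r := q)) (Suc i) j - (x(Suc r := q)) 0 j) (Suc r)"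
    unfolding aff_indep_in_def by blast
  then obtain c where c: "\<forall>j. (\<Sum>i<Suc r. c i * ((x(Suc r := q)) (Suc i) j - (x(Suc r := q)) 0 j)) = 0"
    and nz: "\<exists>i<Suc r. c i \<noteq> 0"
    unfolding lin_indep_n_def by blast
  have h: "\<forall>j. (\<Sum>i<r. c i * (x (Suc i) j - x 0 j)) + c r * (q j - x 0 j) = 0"
    using c sum_extend_point by simp
  show ?thesis
  proof (cases "c r = 0")
    case True
    then have "\<forall>i<r. c i = 0" using lin_dep_extend_point[OF li h] by blast
    then show ?thesis using nz True less_Suc_eq by auto
  next
    case False
    then show ?thesis using lin_dep_extend_point[OF li h] by blast
  qed
qed

lemma face_n_subset: "face_n A C \<Longrightarrow> A \<subseteq> B \<Longrightarrow> B \<subseteq> C \<Longrightarrow> face_n A B"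
  unfolding face_n_def by blast

lemma affdim_n_proper_face_less:
  assumes face: "face_n A B" and ne: "A \<noteq> {}" and neq: "A \<noteq> B" and B: "B \<subseteq> Rn l"
  shows "affdim_n A < affdim_n B"
proof -
  have AB: "A \<subseteq> B" using face by (simp add: face_n_def)
  then have A: "A \<subseteq> Rn l" using B by auto
  define r where "r = nat (affdim_n A)"
  have r: "int r = affdim_n A" using affdim_n_witness[OF A ne] by (simp add: r_def)
  obtain x where x: "\<forall>i\<le>r. x i \<in> A" and li: "lin_indep_n (\<lambda>i j. x (Suc i) j - x 0 j) r"
    using affdim_n_witness(1)[OF A ne] unfolding aff_indep_in_def r_def by blast
  obtain y where y: "y \<in> B" "y \<notin> A" using AB neq by auto
  have "lin_indep_n (\<lambda>i j. (x(Suc r := y)) (Suc i) j - (x(Suc r := y)) 0 j) (Suc r)"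
    unfolding lin_indep_n_def
  proof (intro allI impI)
    fix c i assume c: "\<forall>j. (\<Sum>i<Suc r. c i * ((x(Suc r := y)) (Suc i) j - (x(Suc r := y)) 0 j)) = 0"
      and i: "i < Suc r"
    have h: "\<forall>j. (\<Sum>i<r. c i * (x (Suc i) j - x 0 j)) + c r * (y j - x 0 j) = 0"
      using c sum_extend_point by simp
    show "c i = 0"
    proof (cases "c r = 0")
      case True
      then show ?thesis using lin_dep_extend_point[OF li h] i less_Suc_eq by auto
    next
      case False
      then have "y = aff_point x r (\<lambda>i. - c i / c r)" using lin_dep_extend_point[OF li h] by blast
      then have "y \<in> A" using face_n_contains_aff_point[OF face x y(1)] by blast
      then show ?thesis using y by blast
    qed
  qed
  moreover have "\<forall>i\<le>Suc r. (x(Suc r := y)) i \<in> B" using x y AB by auto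
  ultimately have "aff_indep_in B (Suc r)" unfolding aff_indep_in_def by blast
  then have "int (Suc r) \<le> affdim_n B" using aff_indep_in_le_affdim_n B by blast
  then show ?thesis using r by simp
qed

lemma exists_lin_indep_directions_in_kernel:
  assumes QR: "Q \<subseteq> Rn l" and r: "int r = affdim_n Q" and z: "z \<in> Q" and x0: "x0 \<in> Q"
    and u: "inner_n l u z \<noteq> inner_n l u x0"
  obtains w where "1 \<le> r" "lin_indep_n w (r - 1)" "\<forall>m<r - 1. w m \<in> Rn l"
    "\<forall>m<r - 1. inner_n l u (w m) = 0"
    "\<And>u' \<delta>. \<forall>q\<in>Q. inner_n l u' q = \<delta> \<Longrightarrow> \<forall>m<r - 1. inner_n l u' (w m) = 0"
proof -
  have Qne: "Q \<noteq> {}" using z by auto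
  obtain p where p: "\<forall>k\<le>r. p k \<in> Q" and li: "lin_indep_n (\<lambda>k j. p (Suc k) j - p 0 j) r"
    using affdim_n_witness(1)[OF QR Qne] r unfolding aff_indep_in_def by (metis nat_int)
  define v where "v = (\<lambda>k j. p (Suc k) j - p 0 j)"
  have vR: "\<forall>k<r. v k \<in> Rn l" using p QR unfolding v_def by (auto intro!: Rn_diff)
  obtain \<mu>z \<mu>x where \<mu>: "z = aff_point p r \<mu>z" "x0 = aff_point p r \<mu>x"
    using affdim_n_spanning[OF QR p li r] z x0 by metis
  define \<nu> where "\<nu> = (\<lambda>k. \<mu>z k - \<mu>x k)"
  define d where "d = (\<lambda>j. z j - x0 j)"
  have dR: "d \<in> Rn l" unfolding d_def using z x0 QR by (intro Rn_diff) auto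
  have dsum: "d = (\<lambda>j. \<Sum>k<r. \<nu> k * v k j)"
    unfolding d_def \<nu>_def v_def \<mu> aff_point_def by (simp add: sum_subtractf left_diff_distrib)
  have ud: "inner_n l u d \<noteq> 0" using u by (simp add: d_def inner_n_diff)
  obtain k0 where k0: "k0 < r" "\<nu> k0 \<noteq> 0"
  proof (rule ccontr)
    assume "\<not> thesis"
    then have "\<forall>k<r. \<nu> k = 0" using that by blast
    then have "d = (\<lambda>j. 0)" unfolding dsum by simp
    then show False using ud by (simp add: inner_n_def)
  qed
  \<comment> \<open>Shear the edge vectors along \<open>d\<close> into the kernel of \<open>u\<close>, dropping one that \<open>d\<close> involves.\<close>
  define w where "w = (\<lambda>m j. v (skip k0 m) j - inner_n l u (v (skip k0 m)) / inner_n l u d * d j)"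
  have w: "inner_n l u' (w m) = inner_n l u' (v (skip k0 m)) - inner_n l u (v (skip k0 m)) / inner_n l u d * inner_n l u' d"
    for u' m unfolding w_def by (rule inner_n_shear)
  have "lin_indep_n w (r - 1)"
    unfolding w_def by (rule lin_indep_n_drop_shear[OF li[folded v_def] dsum k0])
  moreover have "\<forall>m<r - 1. w m \<in> Rn l"
    using vR dR skip_less[OF _ k0(1)] Rn_lincomb[of _ l d 1] unfolding w_def Rn_def by auto
  moreover have "\<forall>m<r - 1. inner_n l u (w m) = 0" using ud by (simp add: w)
  moreover have "\<forall>m<r - 1. inner_n l u' (w m) = 0" if "\<forall>q\<in>Q. inner_n l u' q = \<delta>" for u' \<delta>
  proof (intro allI impI)
    fix m assume "m < r - 1"
    then have "Suc (skip k0 m) \<le> r" using skip_less[OF _ k0(1)] by (simp add: Suc_le_eq)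
    then have "p (Suc (skip k0 m)) \<in> Q" "p 0 \<in> Q" using p by auto
    then show "inner_n l u' (w m) = 0"
      using that z x0 by (simp add: w v_def d_def inner_n_diff)
  qed
  moreover have "1 \<le> r" using k0(1) by simp
  ultimately show ?thesis using that by blast
qed

section \<open>Faces and facets of systems of linear constraints\<close>

definition constraint_set ::
    "nat \<Rightarrow> nat set \<Rightarrow> (nat \<Rightarrow> nat \<Rightarrow> real) \<Rightarrow> (nat \<Rightarrow> real) \<Rightarrow>
     nat set \<Rightarrow> (nat \<Rightarrow> nat \<Rightarrow> real) \<Rightarrow> (nat \<Rightarrow> real) \<Rightarrow> (nat \<Rightarrow> real) set" where
  "constraint_set l S a \<beta> T c \<gamma> =
     {x \<in> Rn l. (\<forall>j\<in>S. inner_n l (a j) x \<le> \<beta> j) \<and> (\<forall>j\<in>T. inner_n l (c j) x = \<gamma> j)}"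

lemma face_n_tight_subsystem:
  assumes "J \<subseteq> S"
  shows "face_n {x \<in> constraint_set l S a \<beta> T c \<gamma>. \<forall>j\<in>J. inner_n l (a j) x = \<beta> j} (constraint_set l S a \<beta> T c \<gamma>)"
    (is "face_n ?F ?Q")
  unfolding face_n_def
proof (intro conjI ballI impI)
  show "?F \<subseteq> ?Q" by blast
  show "convex_n ?F"
    unfolding convex_n_def
  proof (intro ballI allI impI)
    fix p q and t :: real
    assume "p \<in> ?F" "q \<in> ?F" "0 \<le> t \<and> t \<le> 1"
    moreover have "(1 - t) * A + t * A = A" for A :: real by (simp add: algebra_simps)
    ultimately show "(\<lambda>i. (1 - t) * p i + t * q i) \<in> ?F"
      unfolding constraint_set_def by (auto simp: inner_n_lincomb Rn_lincomb intro!: convex_comb_le)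
  qed
  fix p q x assume p: "p \<in> ?Q" and q: "q \<in> ?Q" and x: "x \<in> ?F"
    and "p \<noteq> q \<and> (\<exists>t>0. t < 1 \<and> x = (\<lambda>i. (1 - t) * p i + t * q i))"
  then obtain t where t: "0 < t" "t < 1" "x = (\<lambda>i. (1 - t) * p i + t * q i)" by auto
  have "inner_n l (a j) p = \<beta> j \<and> inner_n l (a j) q = \<beta> j" if j: "j \<in> J" for j
  proof (rule convex_comb_eq_bound[OF t(1,2)])
    show "inner_n l (a j) p \<le> \<beta> j" "inner_n l (a j) q \<le> \<beta> j"
      using p q j assms by (auto simp: constraint_set_def)
    show "(1 - t) * inner_n l (a j) p + t * inner_n l (a j) q = \<beta> j"
      using x j t(3) inner_n_lincomb by auto
  qed
  then show "p \<in> ?F" "q \<in> ?F" using p q by auto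
qed

lemma convex_n_constraint_set: "convex_n (constraint_set l S a \<beta> T c \<gamma>)"
  using face_n_tight_subsystem[of "{}" S l a \<beta> T c \<gamma>] by (simp add: face_n_def)

lemma exists_strict_point:
  assumes conv: "convex_n E" and ne: "E \<noteq> {}" and fin: "finite K"
    and le: "\<forall>j\<in>K. \<forall>x\<in>E. inner_n l (a j) x \<le> \<beta> j"
    and lt: "\<forall>j\<in>K. \<exists>x\<in>E. inner_n l (a j) x < \<beta> j"
  shows "\<exists>x0\<in>E. \<forall>j\<in>K. inner_n l (a j) x0 < \<beta> j"
  using fin le lt
proof (induction K rule: finite_induct)
  case empty then show ?case using ne by auto
next
  case (insert j K)
  then obtain x1 where x1: "x1 \<in> E" "\<forall>k\<in>K. inner_n l (a k) x1 < \<beta> k" by auto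
  obtain y where y: "y \<in> E" "inner_n l (a j) y < \<beta> j" using insert.prems by auto
  define x0 where "x0 = (\<lambda>i. (1 - 1/2) * x1 i + (1/2) * y i)"
  have "0 \<le> (1/2::real) \<and> (1/2::real) \<le> 1" by simp
  then have "x0 \<in> E" using conv x1(1) y(1) unfolding convex_n_def x0_def by blast
  moreover have "\<forall>k\<in>insert j K. inner_n l (a k) x0 < \<beta> k"
  proof
    fix k assume k: "k \<in> insert j K"
    have lx: "inner_n l (a k) x0 = (1 - 1/2) * inner_n l (a k) x1 + (1/2) * inner_n l (a k) y"
      unfolding x0_def by (rule inner_n_lincomb)
    show "inner_n l (a k) x0 < \<beta> k"
    proof (cases "k = j")
      case True
      have "inner_n l (a k) x1 \<le> \<beta> k" using insert.prems True x1 by auto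
      then show ?thesis unfolding lx using convex_comb_less_right[of "1/2"] y True by auto
    next
      case False
      then have "k \<in> K" using k by auto
      then have "inner_n l (a k) x1 < \<beta> k" "inner_n l (a k) y \<le> \<beta> k" using x1 insert.prems y by auto
      then show ?thesis unfolding lx using convex_comb_less_left[of "1/2"] by auto
    qed
  qed
  ultimately show ?case by blast
qed

lemma constraint_set_small_steps:
  fixes n :: nat
  assumes fin: "finite S" and z: "z \<in> constraint_set l S a \<beta> T c \<gamma>"
    and wR: "\<forall>k<n. w k \<in> Rn l"
    and wS: "\<forall>j\<in>S. inner_n l (a j) z < \<beta> j \<or> (\<forall>k<n. inner_n l (a j) (w k) = 0)"
    and wT: "\<forall>j\<in>T. \<forall>k<n. inner_n l (c j) (w k) = 0"
  obtains e where "e > 0" "\<forall>k<n. (\<lambda>i. z i + e * w k i) \<in> constraint_set l S a \<beta> T c \<gamma>"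
proof -
  define J where "J = {j\<in>S. inner_n l (a j) z < \<beta> j}"
  have "finite (J \<times> {..<n})" using fin by (simp add: J_def)
  then obtain e where e: "e > 0"
    "\<forall>p\<in>J \<times> {..<n}. e * inner_n l (a (fst p)) (w (snd p)) < \<beta> (fst p) - inner_n l (a (fst p)) z"
    using exists_pos_scale_below[of "J \<times> {..<n}" "\<lambda>p. \<beta> (fst p) - inner_n l (a (fst p)) z"
        "\<lambda>p. inner_n l (a (fst p)) (w (snd p))"]
    by (auto simp: J_def)
  have step: "inner_n l u (\<lambda>i. z i + e * w k i) = inner_n l u z + e * inner_n l u (w k)" for u k
    using inner_n_lincomb[of l u 1 z e "w k"] by simp
  have "(\<lambda>i. z i + e * w k i) \<in> constraint_set l S a \<beta> T c \<gamma>" if k: "k < n" for k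
    unfolding constraint_set_def
  proof (intro CollectI conjI ballI)
    show "(\<lambda>i. z i + e * w k i) \<in> Rn l"
      using Rn_lincomb[of z l "w k" 1 e] z wR k by (simp add: constraint_set_def)
  next
    fix j assume j: "j \<in> S"
    show "inner_n l (a j) (\<lambda>i. z i + e * w k i) \<le> \<beta> j"
    proof (cases "j \<in> J")
      case True
      then have "e * inner_n l (a j) (w k) < \<beta> j - inner_n l (a j) z"
        using e(2)[rule_format, of "(j, k)"] k by simp
      then show ?thesis by (simp add: step)
    next
      case False
      then have "inner_n l (a j) (w k) = 0" using wS j k by (auto simp: J_def)
      moreover have "inner_n l (a j) z \<le> \<beta> j" using z j by (simp add: constraint_set_def)
      ultimately show ?thesis by (simp add: step)
    qed
  next
    fix j assume "j \<in> T"
    then show "inner_n l (c j) (\<lambda>i. z i + e * w k i) = \<gamma> j"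
      using z wT k by (simp add: step constraint_set_def)
  qed
  then show ?thesis using that e(1) by blast
qed

lemma face_n_eq_tight_set:
  assumes fin: "finite S" and face: "face_n E (constraint_set l S a \<beta> T c \<gamma>)" and ne: "E \<noteq> {}"
  shows "E = {x \<in> constraint_set l S a \<beta> T c \<gamma>. \<forall>j\<in>{j\<in>S. \<forall>x\<in>E. inner_n l (a j) x = \<beta> j}. inner_n l (a j) x = \<beta> j}"
    (is "E = {x \<in> ?Q. \<forall>j\<in>?J. _}")
proof
  have EQ: "E \<subseteq> ?Q" and conv: "convex_n E" using face by (auto simp: face_n_def)
  show "E \<subseteq> {x \<in> ?Q. \<forall>j\<in>?J. inner_n l (a j) x = \<beta> j}" using EQ by auto
  define K where "K = S - ?J"
  have "\<exists>x0\<in>E. \<forall>j\<in>K. inner_n l (a j) x0 < \<beta> j"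
  proof (rule exists_strict_point[OF conv ne])
    show "finite K" using fin by (simp add: K_def)
    show le: "\<forall>j\<in>K. \<forall>x\<in>E. inner_n l (a j) x \<le> \<beta> j" using EQ by (auto simp: K_def constraint_set_def)
    show "\<forall>j\<in>K. \<exists>x\<in>E. inner_n l (a j) x < \<beta> j"
      using le by (force simp: K_def)
  qed
  then obtain x0 where x0: "x0 \<in> E" "\<forall>j\<in>K. inner_n l (a j) x0 < \<beta> j" by blast
  show "{x \<in> ?Q. \<forall>j\<in>?J. inner_n l (a j) x = \<beta> j} \<subseteq> E"
  proof
    fix y assume y: "y \<in> {x \<in> ?Q. \<forall>j\<in>?J. inner_n l (a j) x = \<beta> j}"
    have x0Q: "x0 \<in> ?Q" using x0(1) EQ by blast
    \<comment> \<open>Moving slightly from \<open>x0\<close> away from \<open>y\<close> stays in the polyhedron, so \<open>x0\<close> lies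
      strictly between \<open>y\<close> and another point of it.\<close>
    define d where "d = (\<lambda>i. x0 i - y i)"
    have "\<forall>k<1::nat. d \<in> Rn l" using x0Q y by (simp add: d_def Rn_diff constraint_set_def)
    moreover have "\<forall>j\<in>S. inner_n l (a j) x0 < \<beta> j \<or> (\<forall>k<1::nat. inner_n l (a j) d = 0)"
      using x0 y by (auto simp: K_def d_def inner_n_diff)
    moreover have "\<forall>j\<in>T. \<forall>k<1::nat. inner_n l (c j) d = 0"
      using x0Q y by (simp add: d_def inner_n_diff constraint_set_def)
    ultimately obtain e where e: "e > 0" "(\<lambda>i. x0 i + e * d i) \<in> ?Q"
      using constraint_set_small_steps[OF fin x0Q, of 1 "\<lambda>_. d"] by auto
    define t where "t = e / (1 + e)"
    have t: "0 < t" "t < 1" using e by (auto simp: t_def)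
    have t1: "1 - t = 1 / (1 + e)" using e(1) by (simp add: t_def field_simps)
    have x0eq: "x0 = (\<lambda>i. (1 - t) * (x0 i + e * d i) + t * y i)"
    proof
      fix i
      have "(1 - t) * (x0 i + e * d i) + t * y i = (x0 i + e * d i + e * y i) / (1 + e)"
        unfolding t1 by (simp add: t_def add_divide_distrib)
      also have "x0 i + e * d i + e * y i = x0 i * (1 + e)" by (simp add: d_def algebra_simps)
      finally show "x0 i = (1 - t) * (x0 i + e * d i) + t * y i" using e(1) by simp
    qed
    show "y \<in> E"
    proof (cases "y = x0")
      case False
      then have "(\<lambda>i. x0 i + e * d i) \<noteq> y" using x0eq by (auto simp: algebra_simps)
      then show ?thesis using face e(2) y x0(1) x0eq t unfolding face_n_def by blast
    qed (use x0 in simp)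
  qed
qed

lemma exists_irredundant_subsystem:
  assumes "finite S0" and "Q = constraint_set l S0 a \<beta> T c \<gamma>"
  obtains S where "finite S" "Q = constraint_set l S a \<beta> T c \<gamma>"
    "\<forall>i\<in>S. constraint_set l (S - {i}) a \<beta> T c \<gamma> \<noteq> Q"
proof -
  obtain S where S: "S \<subseteq> S0" "Q = constraint_set l S a \<beta> T c \<gamma>"
    and min: "\<And>S'. S' \<subseteq> S0 \<and> Q = constraint_set l S' a \<beta> T c \<gamma> \<Longrightarrow> card S \<le> card S'"
    using ex_has_least_nat[of "\<lambda>S. S \<subseteq> S0 \<and> Q = constraint_set l S a \<beta> T c \<gamma>" S0 card] assms(2)
    by blast
  have fin: "finite S" using S(1) assms(1) finite_subset by blast
  have "constraint_set l (S - {i}) a \<beta> T c \<gamma> \<noteq> Q" if "i \<in> S" for i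
    using min[of "S - {i}"] S(1) card_Diff1_less[OF fin that] by auto
  then show ?thesis using that S fin by blast
qed

lemma exists_point_tight_at_irredundant:
  assumes fin: "finite S" and Q: "Q = constraint_set l S a \<beta> T c \<gamma>" and i: "i \<in> S"
    and irred: "constraint_set l (S - {i}) a \<beta> T c \<gamma> \<noteq> Q"
    and below: "\<exists>q\<in>Q. inner_n l (a i) q < \<beta> i"
  obtains z x0 where "z \<in> Q" "inner_n l (a i) z = \<beta> i" "x0 \<in> Q" "inner_n l (a i) x0 < \<beta> i"
    "\<forall>j\<in>S-{i}. (\<exists>q\<in>Q. inner_n l (a j) q < \<beta> j) \<longrightarrow> inner_n l (a j) z < \<beta> j"
proof -
  have sub: "Q \<subseteq> constraint_set l (S - {i}) a \<beta> T c \<gamma>" unfolding Q constraint_set_def by blast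
  then obtain y where y: "y \<in> constraint_set l (S - {i}) a \<beta> T c \<gamma>" "y \<notin> Q" using irred by blast
  then have yi: "inner_n l (a i) y > \<beta> i" using i unfolding Q constraint_set_def by force
  define K where "K = {j\<in>S. \<exists>q\<in>Q. inner_n l (a j) q < \<beta> j}"
  have "\<exists>x0\<in>Q. \<forall>j\<in>K. inner_n l (a j) x0 < \<beta> j"
  proof (rule exists_strict_point)
    show "convex_n Q" unfolding Q by (rule convex_n_constraint_set)
    show "Q \<noteq> {}" "finite K" using below fin by (auto simp: K_def)
    show "\<forall>j\<in>K. \<forall>x\<in>Q. inner_n l (a j) x \<le> \<beta> j" unfolding K_def Q constraint_set_def by blast
    show "\<forall>j\<in>K. \<exists>x\<in>Q. inner_n l (a j) x < \<beta> j" unfolding K_def by blast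
  qed
  then obtain x0 where x0: "x0 \<in> Q" "\<forall>j\<in>K. inner_n l (a j) x0 < \<beta> j" by blast
  have x0i: "inner_n l (a i) x0 < \<beta> i" using x0 below i by (auto simp: K_def)
  define t where "t = (\<beta> i - inner_n l (a i) x0) / (inner_n l (a i) y - inner_n l (a i) x0)"
  have t: "0 < t" "t < 1" using x0i yi by (auto simp: t_def field_simps)
  define z where "z = (\<lambda>k. (1 - t) * x0 k + t * y k)"
  have lz: "inner_n l u z = (1 - t) * inner_n l u x0 + t * inner_n l u y" for u
    unfolding z_def by (rule inner_n_lincomb)
  have zi: "inner_n l (a i) z = \<beta> i"
  proof -
    have "inner_n l (a i) z = inner_n l (a i) x0 + t * (inner_n l (a i) y - inner_n l (a i) x0)"
      unfolding lz by (simp add: algebra_simps)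
    also have "t * (inner_n l (a i) y - inner_n l (a i) x0) = \<beta> i - inner_n l (a i) x0"
      using x0i yi by (simp add: t_def)
    finally show ?thesis by simp
  qed
  have "x0 \<in> constraint_set l (S - {i}) a \<beta> T c \<gamma>" using x0(1) sub by blast
  then have "z \<in> constraint_set l (S - {i}) a \<beta> T c \<gamma>"
    unfolding z_def using convex_n_constraint_set[of l "S - {i}" a \<beta> T c \<gamma>, unfolded convex_n_def,
        rule_format, of x0 y t] y(1) t by simp
  then have zQ: "z \<in> Q" using zi i unfolding Q constraint_set_def by auto
  have "inner_n l (a j) z < \<beta> j" if j: "j \<in> S - {i}" "\<exists>q\<in>Q. inner_n l (a j) q < \<beta> j" for j
  proof -
    have "inner_n l (a j) x0 < \<beta> j" using x0(2) j by (auto simp: K_def)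
    then show ?thesis
      unfolding lz using convex_comb_less_left[of t] t y(1) j(1) by (auto simp: constraint_set_def)
  qed
  then show ?thesis using that zQ zi x0(1) x0i by blast
qed

lemma facet_n_irredundant_constraint:
  assumes fin: "finite S" and Q: "Q = constraint_set l S a \<beta> T c \<gamma>" and i: "i \<in> S"
    and irred: "constraint_set l (S - {i}) a \<beta> T c \<gamma> \<noteq> Q"
    and below: "\<exists>q\<in>Q. inner_n l (a i) q < \<beta> i"
  shows "facet_n {x\<in>Q. inner_n l (a i) x = \<beta> i} Q"
proof -
  define G where "G = {x\<in>Q. inner_n l (a i) x = \<beta> i}"
  have QR: "Q \<subseteq> Rn l" and GR: "G \<subseteq> Rn l" by (auto simp: Q G_def constraint_set_def)
  have Gface: "face_n G Q"
    using face_n_tight_subsystem[of "{i}" S l a \<beta> T c \<gamma>] i by (simp add: G_def Q)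
  obtain z x0 where z: "z \<in> Q" "inner_n l (a i) z = \<beta> i" and x0: "x0 \<in> Q" "inner_n l (a i) x0 < \<beta> i"
    and zstrict: "\<forall>j\<in>S-{i}. (\<exists>q\<in>Q. inner_n l (a j) q < \<beta> j) \<longrightarrow> inner_n l (a j) z < \<beta> j"
    using exists_point_tight_at_irredundant[OF fin Q i irred below] by blast
  have zG: "z \<in> G" using z by (simp add: G_def)
  have "x0 \<notin> G" using x0(2) by (simp add: G_def)
  then have less: "affdim_n G < affdim_n Q"
    using affdim_n_proper_face_less[OF Gface _ _ QR] zG x0(1) by blast
  define r where "r = nat (affdim_n Q)"
  have r: "int r = affdim_n Q" using affdim_n_witness[OF QR] z(1) by (auto simp: r_def)
  obtain w where r1: "1 \<le> r" and li: "lin_indep_n w (r - 1)" and wR: "\<forall>m<r - 1. w m \<in> Rn l"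
    and wi: "\<forall>m<r - 1. inner_n l (a i) (w m) = 0"
    and const: "\<And>u \<delta>. \<forall>q\<in>Q. inner_n l u q = \<delta> \<Longrightarrow> \<forall>m<r - 1. inner_n l u (w m) = 0"
    using exists_lin_indep_directions_in_kernel[OF QR r z(1) x0(1), of "a i"] z(2) x0(2) by auto
  have "\<forall>j\<in>S. inner_n l (a j) z < \<beta> j \<or> (\<forall>m<r - 1. inner_n l (a j) (w m) = 0)"
  proof
    fix j assume j: "j \<in> S"
    consider "j = i" | "\<forall>q\<in>Q. inner_n l (a j) q = \<beta> j" | "j \<noteq> i" "\<exists>q\<in>Q. inner_n l (a j) q < \<beta> j"
      using j unfolding Q constraint_set_def by force
    then show "inner_n l (a j) z < \<beta> j \<or> (\<forall>m<r - 1. inner_n l (a j) (w m) = 0)"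
    proof cases
      case 2
      then show ?thesis using const by blast
    qed (use wi zstrict j in auto)
  qed
  moreover have "\<forall>j\<in>T. \<forall>m<r - 1. inner_n l (c j) (w m) = 0"
    using const unfolding Q constraint_set_def by blast
  ultimately obtain e where e: "e > 0" "\<forall>m<r - 1. (\<lambda>j. z j + e * w m j) \<in> Q"
    using constraint_set_small_steps[OF fin z(1)[unfolded Q] wR] unfolding Q by blast
  have "\<forall>m<r - 1. (\<lambda>j. z j + e * w m j) \<in> G"
    using e(2) z(2) wi by (simp add: G_def inner_n_lincomb[of l "a i" 1 z e, simplified])
  moreover have "lin_indep_n (\<lambda>m j. e * w m j) (r - 1)" using li e(1) by (intro lin_indep_n_scale) auto
  ultimately have "aff_indep_in G (r - 1)" by (rule aff_indep_in_from_directions[OF zG])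
  then have "int (r - 1) \<le> affdim_n G" using aff_indep_in_le_affdim_n[OF GR] by blast
  then have "affdim_n G = affdim_n Q - 1" using less r r1 by simp
  then show ?thesis using Gface zG unfolding facet_n_def G_def by auto
qed

lemma facets_hyperplane_section:
  assumes "polyhedron_n l Q"
  shows "{F. facet_n F {x\<in>Q. inner_n l h x = b}} \<subseteq> (\<lambda>G. G \<inter> {x. inner_n l h x = b}) ` {G. facet_n G Q}"
proof
  fix F assume "F \<in> {F. facet_n F {x\<in>Q. inner_n l h x = b}}"
  then have F: "face_n F {x\<in>Q. inner_n l h x = b}" "F \<noteq> {}"
    "affdim_n F = affdim_n {x\<in>Q. inner_n l h x = b} - 1"
    by (auto simp: facet_n_def)
  obtain r :: nat and a \<beta> where "Q = {x \<in> Rn l. \<forall>i<r. (\<Sum>j<l. a i j * x j) \<le> \<beta> i}"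
    using assms unfolding polyhedron_n_def by blast
  \<comment> \<open>The hyperplane is carried along as equation number \<open>0\<close>, switched off for \<open>Q\<close> itself.\<close>
  then have Qr: "Q = constraint_set l {..<r} a \<beta> {} (\<lambda>_. h) (\<lambda>_. b)"
    by (auto simp: constraint_set_def inner_n_def)
  obtain S where fin: "finite S" and QS: "Q = constraint_set l S a \<beta> {} (\<lambda>_. h) (\<lambda>_. b)"
    and irred: "\<forall>i\<in>S. constraint_set l (S - {i}) a \<beta> {} (\<lambda>_. h) (\<lambda>_. b) \<noteq> Q"
    by (rule exists_irredundant_subsystem[OF finite_lessThan Qr])
  define Q' where "Q' = {x\<in>Q. inner_n l h x = b}"
  have Q'S: "Q' = constraint_set l S a \<beta> {0} (\<lambda>_. h) (\<lambda>_. b)"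
    unfolding Q'_def QS by (auto simp: constraint_set_def)
  have Q'R: "Q' \<subseteq> Rn l" by (auto simp: Q'S constraint_set_def)
  define J where "J = {j\<in>S. \<forall>x\<in>F. inner_n l (a j) x = \<beta> j}"
  have Frep: "F = {x\<in>Q'. \<forall>j\<in>J. inner_n l (a j) x = \<beta> j}"
    using face_n_eq_tight_set[OF fin F(1)[folded Q'_def, unfolded Q'S] F(2)] unfolding J_def Q'S by simp
  have "F \<noteq> Q'" using F(3) Q'_def by auto
  then obtain q where q: "q \<in> Q'" "q \<notin> F" using F(1) by (auto simp: face_n_def Q'_def)
  then obtain i where i: "i \<in> J" "inner_n l (a i) q \<noteq> \<beta> i" using Frep by blast
  have iS: "i \<in> S" using i(1) by (simp add: J_def)
  have qi: "inner_n l (a i) q < \<beta> i"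
    using i(2) q(1) iS unfolding Q'S constraint_set_def by force
  have Gfacet: "facet_n {x\<in>Q. inner_n l (a i) x = \<beta> i} Q"
    using facet_n_irredundant_constraint[OF fin QS iS] irred iS q(1) qi unfolding Q'_def by blast
  define E where "E = {x\<in>Q'. inner_n l (a i) x = \<beta> i}"
  have Eface: "face_n E Q'"
    using face_n_tight_subsystem[of "{i}" S l a \<beta> "{0}" "\<lambda>_. h" "\<lambda>_. b"] iS unfolding E_def Q'S by simp
  have FE: "F \<subseteq> E" using Frep i(1) by (auto simp: E_def)
  have EQ': "E \<subseteq> Q'" by (auto simp: E_def)
  have "q \<notin> E" using i(2) by (simp add: E_def)
  then have "E \<noteq> Q'" using q(1) by blast
  then have "affdim_n E < affdim_n Q'"
    using affdim_n_proper_face_less[OF Eface _ _ Q'R] FE F(2) by blast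
  moreover have "affdim_n F < affdim_n E" if "F \<noteq> E"
    using affdim_n_proper_face_less[OF face_n_subset[OF F(1)[folded Q'_def] FE EQ'] F(2) that]
      EQ' Q'R by blast
  ultimately have "F = E" using F(3) unfolding Q'_def by fastforce
  then have "F = {x\<in>Q. inner_n l (a i) x = \<beta> i} \<inter> {x. inner_n l h x = b}" by (auto simp: E_def Q'_def)
  then show "F \<in> (\<lambda>G. G \<inter> {x. inner_n l h x = b}) ` {G. facet_n G Q}" using Gfacet by blast
qed

lemma polyhedron_n_Int_hyperplane:
  assumes "polyhedron_n l Q"
  shows "polyhedron_n l {x\<in>Q. inner_n l h x = b}"
proof -
  obtain r :: nat and a \<beta> where Qdef: "Q = {x \<in> Rn l. \<forall>i<r. (\<Sum>j<l. a i j * x j) \<le> \<beta> i}"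
    using assms unfolding polyhedron_n_def by blast
  define a' where "a' = (\<lambda>i. if i < r then a i else if i = r then h else (\<lambda>j. - h j))"
  define \<beta>' where "\<beta>' = (\<lambda>i. if i < r then \<beta> i else if i = r then b else - b)"
  have "(\<forall>i<r + 2. (\<Sum>j<l. a' i j * x j) \<le> \<beta>' i) \<longleftrightarrow>
        (\<forall>i<r. (\<Sum>j<l. a i j * x j) \<le> \<beta> i) \<and> inner_n l h x = b" for x
  proof -
    have "i < r + 2 \<longleftrightarrow> i < r \<or> i = r \<or> i = Suc r" for i by auto
    then have "(\<forall>i<r + 2. (\<Sum>j<l. a' i j * x j) \<le> \<beta>' i) \<longleftrightarrow>
        (\<forall>i<r. (\<Sum>j<l. a' i j * x j) \<le> \<beta>' i) \<and> (\<Sum>j<l. a' r j * x j) \<le> \<beta>' r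
        \<and> (\<Sum>j<l. a' (Suc r) j * x j) \<le> \<beta>' (Suc r)"
      by blast
    then show ?thesis by (auto simp: a'_def \<beta>'_def inner_n_def sum_negf)
  qed
  then have "{x\<in>Q. inner_n l h x = b} = {x \<in> Rn l. \<forall>i<r + 2. (\<Sum>j<l. a' i j * x j) \<le> \<beta>' i}"
    unfolding Qdef by auto
  then show ?thesis unfolding polyhedron_n_def by blast
qed

lemma facets_hyperplane_section_card_le:
  assumes "polyhedron_n l Q" and fin: "finite {G. facet_n G Q}"
  shows "finite {G. facet_n G {x\<in>Q. inner_n l h x = b}}"
    and "card {G. facet_n G {x\<in>Q. inner_n l h x = b}} \<le> card {G. facet_n G Q}"
proof -
  have sub: "{G. facet_n G {x\<in>Q. inner_n l h x = b}} \<subseteq> (\<lambda>G. G \<inter> {x. inner_n l h x = b}) ` {G. facet_n G Q}"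
    by (rule facets_hyperplane_section[OF assms(1)])
  then show "finite {G. facet_n G {x\<in>Q. inner_n l h x = b}}"
    using fin finite_surj by blast
  have "card {G. facet_n G {x\<in>Q. inner_n l h x = b}}
      \<le> card ((\<lambda>G. G \<inter> {x. inner_n l h x = b}) ` {G. facet_n G Q})"
    by (rule card_mono[OF finite_imageI[OF fin] sub])
  also have "\<dots> \<le> card {G. facet_n G Q}" by (rule card_image_le[OF fin])
  finally show "card {G. facet_n G {x\<in>Q. inner_n l h x = b}} \<le> card {G. facet_n G Q}" .
qed

section \<open>MILEFs of exposed faces and affine images\<close>

lemma convex_hull_Int_supporting_hyperplane:
  fixes T :: "'a::euclidean_space set"
  assumes le: "convex hull T \<subseteq> {y. c \<bullet> y \<le> d}"
  shows "convex hull T \<inter> {y. c \<bullet> y = d} = convex hull (T \<inter> {y. c \<bullet> y = d})"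
proof
  show "convex hull (T \<inter> {y. c \<bullet> y = d}) \<subseteq> convex hull T \<inter> {y. c \<bullet> y = d}"
    by (intro Int_greatest hull_mono hull_minimal) (auto simp: convex_hyperplane)
  show "convex hull T \<inter> {y. c \<bullet> y = d} \<subseteq> convex hull (T \<inter> {y. c \<bullet> y = d})"
  proof
    fix y assume y: "y \<in> convex hull T \<inter> {y. c \<bullet> y = d}"
    then obtain s where s: "finite s" "s \<subseteq> T" "y \<in> convex hull s"
      using y unfolding caratheodory[of T] by blast
    have "convex hull s \<inter> {y. c \<bullet> y = d} face_of convex hull s"
      by (rule face_of_Int_supporting_hyperplane_le)
        (use le hull_mono[OF s(2)] in auto)
    then obtain s' where s': "s' \<subseteq> s" "convex hull s \<inter> {y. c \<bullet> y = d} = convex hull s'"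
      using face_of_convex_hull_subset finite_imp_compact s(1) by blast
    have "s' \<subseteq> T \<inter> {y. c \<bullet> y = d}"
      using s' s(2) hull_subset[of s' convex] by blast
    then show "y \<in> convex hull (T \<inter> {y. c \<bullet> y = d})"
      using s' y s(3) hull_mono by blast
  qed
qed

lemma has_MILEF_Int_supporting_hyperplane:
  fixes P :: "(real ^ 'd) set"
  assumes MILEF: "has_MILEF m k P" and le: "P \<subseteq> {y. c \<bullet> y \<le> d}"
  shows "has_MILEF m k (P \<inter> {y. c \<bullet> y = d})"
proof -
  obtain l Q \<sigma> \<pi> where QR: "Q \<subseteq> Rn l" and polyQ: "polyhedron_n l Q"
    and finQ: "finite {F. facet_n F Q}" and cardQ: "card {F. facet_n F Q} \<le> m"
    and \<sigma>: "affine_nn l k \<sigma>" and \<pi>: "affine_nv l \<pi>"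
    and Pdef: "P = convex hull (\<pi> ` {x \<in> Q. \<sigma> x \<in> Zn k})"
    using MILEF unfolding has_MILEF_def by blast
  obtain v p where \<pi>def: "\<forall>x\<in>Rn l. \<pi> x = p + (\<Sum>j<l. x j *\<^sub>R v j)"
    using \<pi> unfolding affine_nv_def by blast
  define h where "h = (\<lambda>j. c \<bullet> v j)"
  define b where "b = d - c \<bullet> p"
  have hyp: "c \<bullet> \<pi> x = d \<longleftrightarrow> inner_n l h x = b" if "x \<in> Rn l" for x
    using \<pi>def that by (auto simp: inner_add_right inner_sum_right inner_n_def h_def b_def mult.commute)
  define Q' where "Q' = {x\<in>Q. inner_n l h x = b}"
  have "\<pi> ` {x \<in> Q'. \<sigma> x \<in> Zn k} = \<pi> ` {x \<in> Q. \<sigma> x \<in> Zn k} \<inter> {y. c \<bullet> y = d}"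
    using hyp QR by (auto simp: Q'_def)
  then have "P \<inter> {y. c \<bullet> y = d} = convex hull (\<pi> ` {x \<in> Q'. \<sigma> x \<in> Zn k})"
    using convex_hull_Int_supporting_hyperplane[of "\<pi> ` {x \<in> Q. \<sigma> x \<in> Zn k}" c d] le Pdef by simp
  moreover have "Q' \<subseteq> Rn l" using QR by (auto simp: Q'_def)
  moreover have "polyhedron_n l Q'" unfolding Q'_def by (rule polyhedron_n_Int_hyperplane[OF polyQ])
  moreover have "finite {G. facet_n G Q'}" "card {G. facet_n G Q'} \<le> m"
    using facets_hyperplane_section_card_le[OF polyQ finQ, of h b] cardQ by (simp_all add: Q'_def)
  ultimately show ?thesis using \<sigma> \<pi> unfolding has_MILEF_def by blast
qed

lemma has_MILEF_affine_image:
  fixes P :: "(real ^ 'd) set" and g :: "real ^ 'd \<Rightarrow> real ^ 'e"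
  assumes g: "linear g" and MILEF: "has_MILEF m k P"
  shows "has_MILEF m k ((\<lambda>x. g x + c) ` P)"
proof -
  obtain l Q \<sigma> \<pi> where Q: "Q \<subseteq> Rn l" "polyhedron_n l Q"
    "finite {F. facet_n F Q}" "card {F. facet_n F Q} \<le> m"
    and \<sigma>: "affine_nn l k \<sigma>" and \<pi>: "affine_nv l \<pi>"
    and Pdef: "P = convex hull (\<pi> ` {x \<in> Q. \<sigma> x \<in> Zn k})"
    using MILEF unfolding has_MILEF_def by blast
  obtain v p where \<pi>def: "\<forall>x\<in>Rn l. \<pi> x = p + (\<Sum>j<l. x j *\<^sub>R v j)"
    using \<pi> unfolding affine_nv_def by blast
  have "affine_nv l (\<lambda>x. g (\<pi> x) + c)"
    unfolding affine_nv_def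
  proof (intro exI ballI)
    fix x assume "x \<in> Rn l"
    then show "g (\<pi> x) + c = (g p + c) + (\<Sum>j<l. x j *\<^sub>R g (v j))"
      using \<pi>def by (simp add: linear_add[OF g] linear_sum[OF g] linear_scale[OF g] algebra_simps)
  qed
  moreover have "(\<lambda>x. g x + c) ` P = convex hull ((\<lambda>x. g (\<pi> x) + c) ` {x \<in> Q. \<sigma> x \<in> Zn k})"
  proof -
    have translate: "(\<lambda>x. g x + c) ` S = (\<lambda>y. c + y) ` (g ` S)" for S
      by (auto simp: image_image add.commute)
    have "(\<lambda>x. g x + c) ` P = convex hull ((\<lambda>x. g x + c) ` \<pi> ` {x \<in> Q. \<sigma> x \<in> Zn k})"
      unfolding Pdef translate convex_hull_translation convex_hull_linear_image[OF g] ..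
    then show ?thesis by (simp add: image_image)
  qed
  ultimately show ?thesis using Q \<sigma> unfolding has_MILEF_def by blast
qed

theorem mainTheorem12:
  fixes P :: "(real ^ 'd) set" and P' :: "(real ^ 'e) set"
    and F :: "(real ^ 'd) set" and f :: "real ^ 'd \<Rightarrow> real ^ 'e"
    and m k :: nat
  assumes "polyhedron P" and "P \<noteq> {}"
    and "polyhedron P'" and "P' \<noteq> {}"
    and "F face_of P"
    and "\<exists>g c. linear g \<and> f = (\<lambda>x. g x + c)"
    and "P' = f ` F"
    and "has_MILEF m k P"
  shows "has_MILEF m k P'"
proof -
  obtain g c where g: "linear g" and f: "f = (\<lambda>x. g x + c)" using assms(6) by blast
  have "F exposed_face_of P" using exposed_face_of_polyhedron[OF assms(1)] assms(5) by simp
  then obtain a d where "P \<subseteq> {x. a \<bullet> x \<le> d}" and F: "F = P \<inter> {x. a \<bullet> x = d}"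
    unfolding exposed_face_of_def by blast
  then have "has_MILEF m k F"
    using has_MILEF_Int_supporting_hyperplane[OF assms(8)] by simp
  then show ?thesis
    using has_MILEF_affine_image[OF g] assms(7) f by simp
qed

end
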